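(* Let $\mathcal M=(M,<,+,0,\ldots)$ be a definably complete expansion of an ordered group. Let $C\subseteq M^m$ and $P$ be definable sets with $C$ closed and bounded, and let $f:C\times P\to M$ be a definable function. Then $f$ is equi-continuous with respect to $P$ if and only if it is uniformly equi-continuous with respect to $P$.
   Context: "Definable" means definable in $\mathcal M$ with parameters; $(M,<)$ is dense without endpoints. Definably complete: every definable subset of $M$ has sup and inf in $M\cup\{\pm\infty\}$. For $x\in M^m$, $|x|$ denotes $\max_i|x_i|$. $f$ is equi-continuous with respect to $P$ if for all $\varepsilon>0$ and $x\in C$ there is $\delta>0$ such that for all $p\in P$ and $x'\in C$, $|x-x'|<\delta$ implies $|f(x,p)-f(x',p)|<\varepsilon$. It is uniformly equi-continuous with respect to $P$ if for all $\varepsilon>0$ there is $\delta>0$ such that for all $p\in P$ and $x,x'\in C$, $|x-x'|<\delta$ implies $|f(x,p)-f(x',p)|<\varepsilon$. *)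

theory Defs
  imports Main
begin

text \<open>A "definable structure" on M is a family
  D n of subsets of M^n (the sets definable with parameters in some expansion of
  (M,<,+,0)), given by van den Dries' closure axioms.\<close>

definition tuples :: "nat \<Rightarrow> 'a list set" where
  "tuples n = {xs. length xs = n}"

definition definable_structure ::
  "(nat \<Rightarrow> 'a::{linorder,group_add} list set \<Rightarrow> bool) \<Rightarrow> bool" where
  "definable_structure D \<longleftrightarrow>
     (\<forall>n A. D n A \<longrightarrow> A \<subseteq> tuples n)
   \<and> (\<forall>n. D n (tuples n))
   \<and> (\<forall>n A B. D n A \<longrightarrow> D n B \<longrightarrow> D n (A - B))
   \<and> (\<forall>n k A g. D n A \<longrightarrow> (\<forall>i<n. g i < k) \<longrightarrow>
        D k {ys \<in> tuples k. map (\<lambda>i. ys ! g i) [0..<n] \<in> A})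
   \<and> (\<forall>n A. D (Suc n) A \<longrightarrow> D n (butlast ` A))
   \<and> (\<forall>a. D 1 {[a]})
   \<and> D 2 {[x, y] | x y. x = y}
   \<and> D 2 {[x, y] | x y. x < y}
   \<and> D 3 {[x, y, z] | x y z. z = x + y}"

definition definably_complete ::
  "(nat \<Rightarrow> 'a::{linorder,group_add} list set \<Rightarrow> bool) \<Rightarrow> bool" where
  "definably_complete D \<longleftrightarrow>
     (\<forall>A. D 1 A \<longrightarrow>
        (let S = {x. [x] \<in> A} in
           (S \<noteq> {} \<and> (\<exists>b. \<forall>x\<in>S. x \<le> b) \<longrightarrow>
              (\<exists>s. (\<forall>x\<in>S. x \<le> s) \<and> (\<forall>b. (\<forall>x\<in>S. x \<le> b) \<longrightarrow> s \<le> b)))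
         \<and> (S \<noteq> {} \<and> (\<exists>b. \<forall>x\<in>S. b \<le> x) \<longrightarrow>
              (\<exists>s. (\<forall>x\<in>S. s \<le> x) \<and> (\<forall>b. (\<forall>x\<in>S. b \<le> x) \<longrightarrow> b \<le> s)))))"

definition gabs :: "'a::{linorder,group_add} \<Rightarrow> 'a" where
  "gabs x = max x (- x)"

definition vnorm :: "'a::{linorder,group_add} list \<Rightarrow> 'a" where
  "vnorm xs = foldr max (map gabs xs) 0"

definition vdist :: "'a::{linorder,group_add} list \<Rightarrow> 'a list \<Rightarrow> 'a" where
  "vdist xs ys = vnorm (map2 (-) xs ys)"

definition closed_in_tuples :: "nat \<Rightarrow> 'a::{linorder,group_add} list set \<Rightarrow> bool" where
  "closed_in_tuples m C \<longleftrightarrow>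
     (\<forall>x \<in> tuples m - C. \<exists>e>0. \<forall>y \<in> tuples m. vdist x y < e \<longrightarrow> y \<notin> C)"

definition bounded_in_tuples :: "'a::{linorder,group_add} list set \<Rightarrow> bool" where
  "bounded_in_tuples C \<longleftrightarrow> (\<exists>R. \<forall>x\<in>C. vnorm x \<le> R)"

definition definable_function ::
  "(nat \<Rightarrow> 'a::{linorder,group_add} list set \<Rightarrow> bool) \<Rightarrow> nat \<Rightarrow> nat \<Rightarrow>
    'a list set \<Rightarrow> 'a list set \<Rightarrow> ('a list \<Rightarrow> 'a list \<Rightarrow> 'a) \<Rightarrow> bool" where
  "definable_function D m k C P f \<longleftrightarrow>
     D (m + k + 1) {x @ p @ [f x p] | x p. x \<in> C \<and> p \<in> P}"

definition equi_continuous ::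
  "'a::{linorder,group_add} list set \<Rightarrow> 'a list set \<Rightarrow> ('a list \<Rightarrow> 'a list \<Rightarrow> 'a) \<Rightarrow> bool" where
  "equi_continuous C P f \<longleftrightarrow>
     (\<forall>e>0. \<forall>x\<in>C. \<exists>d>0. \<forall>p\<in>P. \<forall>x'\<in>C.
        vdist x x' < d \<longrightarrow> gabs (f x p - f x' p) < e)"

definition uniformly_equi_continuous ::
  "'a::{linorder,group_add} list set \<Rightarrow> 'a list set \<Rightarrow> ('a list \<Rightarrow> 'a list \<Rightarrow> 'a) \<Rightarrow> bool" where
  "uniformly_equi_continuous C P f \<longleftrightarrow>
     (\<forall>e>0. \<exists>d>0. \<forall>p\<in>P. \<forall>x\<in>C. \<forall>x'\<in>C.
        vdist x x' < d \<longrightarrow> gabs (f x p - f x' p) < e)"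

end

theory Submission
  imports Defs
begin

text \<open>If uniform equi-continuity fails for some \<open>\<epsilon>\<close>, then for every \<open>t > 0\<close> there are
  \<open>x, x' \<in> C\<close> at distance \<open>< t\<close> and a parameter \<open>p\<close> with \<open>|f(x,p) - f(x',p)| \<ge> \<epsilon>\<close>.
  The closures \<open>B\<^sub>t\<close> of the sets of such \<open>x\<close> form a definable family of nonempty closed
  bounded sets that shrinks as \<open>t\<close> decreases. Definable completeness forces such a family to
  have a common point: in dimension one the infimum over \<open>t\<close> of \<open>sup B\<^sub>t\<close> lies in every
  \<open>B\<^sub>t\<close>; in general one first finds a common point \<open>a\<close> of the closed first-coordinate
  projections and then recurses on the (closed) fibres near \<open>a\<close>. A common point \<open>x\<^sub>0\<close> lies
  in \<open>C\<close> and is arbitrarily close to points \<open>x\<close> whose partners \<open>x'\<close> are also close to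
  \<open>x\<^sub>0\<close>, so equi-continuity at \<open>x\<^sub>0\<close> bounds \<open>|f(x,p) - f(x',p)|\<close> by less than \<open>\<epsilon>\<close>.\<close>

section \<open>First-order formulas over a definable structure\<close>

text \<open>Definability of the concrete sets below is proved by writing them as formulas whose atoms
  are definable sets. Variables are de Bruijn indices into the environment list:
  \<^term>\<open>Atom S g\<close> holds if the variables selected by \<open>g\<close> form a tuple in \<open>S\<close>;
  \<^term>\<open>Exists\<close> binds position 0 and \<^term>\<open>Exists_block j\<close> positions \<open>0..<j\<close>.\<close>

datatype 'a formula =
    Atom "'a list set" "'a list \<Rightarrow> 'a list"
  | Neg "'a formula" | Conj "'a formula" "'a formula" | Imp "'a formula" "'a formula"
  | Exists "'a formula" | Forall "'a formula" | Exists_block nat "'a formula"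

fun sat :: "'a formula \<Rightarrow> 'a list \<Rightarrow> bool" where
  "sat (Atom S g) e \<longleftrightarrow> g e \<in> S"
| "sat (Neg \<phi>) e \<longleftrightarrow> \<not> sat \<phi> e"
| "sat (Conj \<phi> \<psi>) e \<longleftrightarrow> sat \<phi> e \<and> sat \<psi> e"
| "sat (Imp \<phi> \<psi>) e \<longleftrightarrow> (sat \<phi> e \<longrightarrow> sat \<psi> e)"
| "sat (Exists \<phi>) e \<longleftrightarrow> (\<exists>a. sat \<phi> (a # e))"
| "sat (Forall \<phi>) e \<longleftrightarrow> (\<forall>a. sat \<phi> (a # e))"
| "sat (Exists_block j \<phi>) e \<longleftrightarrow> (\<exists>ys. length ys = j \<and> sat \<phi> (ys @ e))"

definition true_fm :: "'a formula" where
  "true_fm = Neg (Atom {} (\<lambda>e. []))"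

definition less_fm :: "nat \<Rightarrow> nat \<Rightarrow> 'a::ord formula" where
  "less_fm i j = Atom {[x, y] | x y. x < y} (\<lambda>e. [e!i, e!j])"

definition le_fm :: "nat \<Rightarrow> nat \<Rightarrow> 'a::ord formula" where
  "le_fm i j = Neg (less_fm j i)"

definition plus_fm :: "nat \<Rightarrow> nat \<Rightarrow> nat \<Rightarrow> 'a::plus formula" where
  "plus_fm i j l = Atom {[x, y, z] | x y z. z = x + y} (\<lambda>e. [e!i, e!j, e!l])"

definition const_fm :: "nat \<Rightarrow> 'a \<Rightarrow> 'a formula" where
  "const_fm i c = Atom {[c]} (\<lambda>e. [e!i])"

definition pos_fm :: "nat \<Rightarrow> 'a::{zero,ord} formula" where
  "pos_fm i = Exists (Conj (const_fm 0 0) (less_fm 0 (Suc i)))"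

definition diff_less_fm :: "nat \<Rightarrow> nat \<Rightarrow> nat \<Rightarrow> 'a::{plus,ord} formula" where
  "diff_less_fm i j l = Exists (Conj (plus_fm (Suc l) (Suc j) 0) (less_fm (Suc i) 0))"

definition dist_less_fm :: "nat \<Rightarrow> nat \<Rightarrow> nat \<Rightarrow> 'a::{plus,ord} formula" where
  "dist_less_fm i j l = Conj (diff_less_fm i j l) (diff_less_fm j i l)"

definition dist_less_const_fm :: "nat \<Rightarrow> nat \<Rightarrow> 'a::{plus,ord} \<Rightarrow> 'a formula" where
  "dist_less_const_fm i j c = Exists (Conj (const_fm 0 c) (dist_less_fm (Suc i) (Suc j) 0))"

fun conj_upto :: "nat \<Rightarrow> (nat \<Rightarrow> 'a formula) \<Rightarrow> 'a formula" where
  "conj_upto 0 F = true_fm"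
| "conj_upto (Suc m) F = Conj (conj_upto m F) (F m)"

definition vdist_less_fm :: "nat \<Rightarrow> nat \<Rightarrow> nat \<Rightarrow> nat \<Rightarrow> 'a::{zero,plus,ord} formula" where
  "vdist_less_fm a b m l = Conj (pos_fm l) (conj_upto m (\<lambda>i. dist_less_fm (a + i) (b + i) l))"

lemma sat_true_fm [simp]: "sat true_fm e"
  by (simp add: true_fm_def)

lemma sat_less_fm [simp]: "sat (less_fm i j) e \<longleftrightarrow> e!i < e!j"
  by (simp add: less_fm_def)

lemma sat_le_fm [simp]: "sat (le_fm i j) e \<longleftrightarrow> e!i \<le> (e!j :: 'a::linorder)"
  by (auto simp: le_fm_def)

lemma sat_plus_fm [simp]: "sat (plus_fm i j l) e \<longleftrightarrow> e!l = e!i + e!j"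
  by (simp add: plus_fm_def)

lemma sat_const_fm [simp]: "sat (const_fm i c) e \<longleftrightarrow> e!i = c"
  by (simp add: const_fm_def)

lemma sat_pos_fm [simp]: "sat (pos_fm i) e \<longleftrightarrow> 0 < e!i"
  by (simp add: pos_fm_def)

lemma sat_conj_upto [simp]: "sat (conj_upto m F) e \<longleftrightarrow> (\<forall>i<m. sat (F i) e)"
  by (induction m) (auto simp: less_Suc_eq)

section \<open>Definable sets\<close>

definition is_sup :: "'a::order set \<Rightarrow> 'a \<Rightarrow> bool" where
  "is_sup S s \<longleftrightarrow> (\<forall>x\<in>S. x \<le> s) \<and> (\<forall>b. (\<forall>x\<in>S. x \<le> b) \<longrightarrow> s \<le> b)"

definition is_inf :: "'a::order set \<Rightarrow> 'a \<Rightarrow> bool" where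
  "is_inf S s \<longleftrightarrow> (\<forall>x\<in>S. s \<le> x) \<and> (\<forall>b. (\<forall>x\<in>S. b \<le> x) \<longrightarrow> b \<le> s)"

locale definable_sets =
  fixes D :: "nat \<Rightarrow> 'a::{linorder,group_add} list set \<Rightarrow> bool"
  assumes definable_structure: "definable_structure D"
begin

lemma definable_subset_tuples: "D n A \<Longrightarrow> A \<subseteq> tuples n"
  and definable_tuples: "D n (tuples n)"
  and definable_diff: "D n A \<Longrightarrow> D n B \<Longrightarrow> D n (A - B)"
  and definable_reindex:
    "D n A \<Longrightarrow> (\<forall>i<n. g i < k) \<Longrightarrow> D k {ys \<in> tuples k. map (\<lambda>i. ys ! g i) [0..<n] \<in> A}"
  and definable_butlast_image: "D (Suc n) A \<Longrightarrow> D n (butlast ` A)"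
  and definable_singleton: "D 1 {[a]}"
  and definable_less: "D 2 {[x, y] | x y. x < y}"
  and definable_plus: "D 3 {[x, y, z] | x y z. z = x + y}"
  using definable_structure unfolding definable_structure_def by simp_all

lemma definable_empty: "D n {}"
  using definable_diff[OF definable_tuples definable_tuples, of n] by simp

definition definable :: "nat \<Rightarrow> ('a list \<Rightarrow> bool) \<Rightarrow> bool" where
  "definable n Q \<longleftrightarrow> D n {e \<in> tuples n. Q e}"

lemma definable_cong:
  assumes "definable n Q" and "\<And>e. length e = n \<Longrightarrow> Q e = Q' e"
  shows "definable n Q'"
proof -
  have "{e \<in> tuples n. Q e} = {e \<in> tuples n. Q' e}"
    using assms(2) by (auto simp: tuples_def)
  then show ?thesis using assms(1) by (simp add: definable_def)
qed

lemma definable_not: "definable n Q \<Longrightarrow> definable n (\<lambda>e. \<not> Q e)"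
proof -
  assume "definable n Q"
  then have "D n (tuples n - {e \<in> tuples n. Q e})"
    unfolding definable_def by (intro definable_diff definable_tuples)
  moreover have "tuples n - {e \<in> tuples n. Q e} = {e \<in> tuples n. \<not> Q e}" by auto
  ultimately show ?thesis by (simp add: definable_def)
qed

lemma definable_conj: "definable n Q \<Longrightarrow> definable n Q' \<Longrightarrow> definable n (\<lambda>e. Q e \<and> Q' e)"
proof -
  let ?A = "{e \<in> tuples n. Q e}" and ?B = "{e \<in> tuples n. Q' e}"
  assume "definable n Q" "definable n Q'"
  then have "D n (?A - (?A - ?B))" unfolding definable_def by (intro definable_diff)
  moreover have "?A - (?A - ?B) = {e \<in> tuples n. Q e \<and> Q' e}" by auto
  ultimately show ?thesis by (simp add: definable_def)
qed

lemma definable_imp: "definable n Q \<Longrightarrow> definable n Q' \<Longrightarrow> definable n (\<lambda>e. Q e \<longrightarrow> Q' e)"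
  using definable_not[OF definable_conj[OF _ definable_not]] by simp

lemma definable_ex_last: "definable (Suc n) Q \<Longrightarrow> definable n (\<lambda>e. \<exists>a. Q (e @ [a]))"
proof -
  assume "definable (Suc n) Q"
  then have "D n (butlast ` {e \<in> tuples (Suc n). Q e})"
    unfolding definable_def by (rule definable_butlast_image)
  moreover have "butlast ` {e \<in> tuples (Suc n). Q e} = {e \<in> tuples n. \<exists>a. Q (e @ [a])}"
  proof (intro equalityI subsetI)
    fix e assume "e \<in> butlast ` {e \<in> tuples (Suc n). Q e}"
    then obtain ys where ys: "length ys = Suc n" "Q ys" "e = butlast ys"
      by (auto simp: tuples_def)
    then have "ys = e @ [last ys]"
      by (metis append_butlast_last_id list.size(3) nat.distinct(1))
    then show "e \<in> {e \<in> tuples n. \<exists>a. Q (e @ [a])}"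
      using ys by (auto simp: tuples_def) metis
  next
    fix e assume "e \<in> {e \<in> tuples n. \<exists>a. Q (e @ [a])}"
    then obtain a where "length e = n" "Q (e @ [a])" by (auto simp: tuples_def)
    then show "e \<in> butlast ` {e \<in> tuples (Suc n). Q e}"
      by (intro image_eqI[of _ _ "e @ [a]"]) (auto simp: tuples_def)
  qed
  ultimately show ?thesis by (simp add: definable_def)
qed

definition selector :: "nat \<Rightarrow> ('a list \<Rightarrow> 'a list) \<Rightarrow> bool" where
  "selector n g \<longleftrightarrow>
     (\<exists>is. (\<forall>i\<in>set is. i < n) \<and> (\<forall>e. length e = n \<longrightarrow> g e = map (nth e) is))"

lemma selector_Nil [simp]: "selector n (\<lambda>e. [])"
  unfolding selector_def by (intro exI[of _ "[]"]) auto

lemma selector_Cons [simp]: "i < n \<Longrightarrow> selector n g \<Longrightarrow> selector n (\<lambda>e. e!i # g e)"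
  unfolding selector_def by (metis list.map(2) set_ConsD)

lemma selector_append [simp]: "selector n g \<Longrightarrow> selector n h \<Longrightarrow> selector n (\<lambda>e. g e @ h e)"
  unfolding selector_def by (metis map_append Un_iff set_append)

lemma selector_take_drop [simp]: "a + l \<le> n \<Longrightarrow> selector n (\<lambda>e. take l (drop a e))"
  unfolding selector_def by (intro exI[of _ "[a..<a+l]"]) (auto intro!: nth_equalityI)

lemma selector_take [simp]: "l \<le> n \<Longrightarrow> selector n (\<lambda>e. take l e)"
  using selector_take_drop[of 0 l n] by simp

lemma definable_atom:
  assumes "selector n g" and S: "D j S"
  shows "definable n (\<lambda>e. g e \<in> S)"
proof -
  obtain "is" where is_bound: "\<forall>i\<in>set is. i < n"
    and g: "\<And>e. length e = n \<Longrightarrow> g e = map (nth e) is"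
    using assms(1) unfolding selector_def by blast
  show ?thesis
  proof (cases "length is = j")
    case True
    have "D n {e \<in> tuples n. map (\<lambda>i. e ! (is ! i)) [0..<j] \<in> S}"
      using S is_bound True by (intro definable_reindex) auto
    moreover have "map (\<lambda>i. e ! (is ! i)) [0..<j] = map (nth e) is" for e :: "'a list"
      using True by (intro nth_equalityI) auto
    ultimately have "definable n (\<lambda>e. map (nth e) is \<in> S)" by (simp add: definable_def)
    then show ?thesis by (rule definable_cong) (simp add: g)
  next
    case False
    then have "definable n (\<lambda>e. g e \<in> S) \<longleftrightarrow> D n {}"
      using definable_subset_tuples[OF S] g unfolding definable_def
      by (intro arg_cong[where f = "D n"]) (auto simp: tuples_def)
    then show ?thesis using definable_empty by blast
  qed
qed

lemma definable_ex: "definable (Suc n) Q \<Longrightarrow> definable n (\<lambda>e. \<exists>a. Q (a # e))"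
proof -
  let ?rotate = "\<lambda>e. map (nth e) (n # [0..<n])"
  assume Q: "definable (Suc n) Q"
  have "selector (Suc n) ?rotate" unfolding selector_def by (intro exI[of _ "n # [0..<n]"]) auto
  then have "definable (Suc n) (\<lambda>e. ?rotate e \<in> {e \<in> tuples (Suc n). Q e})"
    using Q unfolding definable_def by (intro definable_atom[unfolded definable_def])
  then have "definable (Suc n) (\<lambda>e. Q (?rotate e))"
    by (rule definable_cong) (auto simp: tuples_def)
  then have "definable n (\<lambda>e. \<exists>a. Q (?rotate (e @ [a])))" by (rule definable_ex_last)
  then show ?thesis
  proof (rule definable_cong)
    fix e :: "'a list" assume "length e = n"
    then have "?rotate (e @ [a]) = a # e" for a
      by (auto simp: nth_append intro: nth_equalityI)
    then show "(\<exists>a. Q (?rotate (e @ [a]))) = (\<exists>a. Q (a # e))" by simp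
  qed
qed

lemma definable_all: "definable (Suc n) Q \<Longrightarrow> definable n (\<lambda>e. \<forall>a. Q (a # e))"
  using definable_not[OF definable_ex[OF definable_not]] by simp

lemma definable_ex_block:
  "definable (j + n) Q \<Longrightarrow> definable n (\<lambda>e. \<exists>ys. length ys = j \<and> Q (ys @ e))"
proof (induction j arbitrary: n Q)
  case 0
  then have "definable n Q" by simp
  then show ?case by (rule definable_cong) auto
next
  case (Suc j)
  then have "definable (Suc n) (\<lambda>e. \<exists>ys. length ys = j \<and> Q (ys @ e))"
    by (intro Suc.IH) simp
  then have "definable n (\<lambda>e. \<exists>a ys. length ys = j \<and> Q (ys @ a # e))" by (rule definable_ex)
  moreover have "(\<exists>a ys. length ys = j \<and> Q (ys @ a # e)) \<longleftrightarrow>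
                 (\<exists>ys. length ys = Suc j \<and> Q (ys @ e))" for e
  proof
    assume "\<exists>ys. length ys = Suc j \<and> Q (ys @ e)"
    then obtain ys where ys: "length ys = Suc j" "Q (ys @ e)" by blast
    then have "ys = butlast ys @ [last ys]"
      by (metis append_butlast_last_id list.size(3) nat.distinct(1))
    then have "Q (butlast ys @ last ys # e)" using ys by (metis append.assoc append_Cons append_Nil)
    then show "\<exists>a ys. length ys = j \<and> Q (ys @ a # e)"
      using ys(1) by (intro exI[of _ "last ys"] exI[of _ "butlast ys"]) auto
  next
    assume "\<exists>a ys. length ys = j \<and> Q (ys @ a # e)"
    then obtain a ys where "length ys = j" "Q (ys @ [a] @ e)" by auto
    then show "\<exists>ys. length ys = Suc j \<and> Q (ys @ e)"
      by (intro exI[of _ "ys @ [a]"]) simp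
  qed
  ultimately show ?case by (rule definable_cong)
qed

fun wf_formula :: "nat \<Rightarrow> 'a formula \<Rightarrow> bool" where
  "wf_formula n (Atom S g) \<longleftrightarrow> selector n g \<and> (\<exists>j. D j S)"
| "wf_formula n (Neg \<phi>) \<longleftrightarrow> wf_formula n \<phi>"
| "wf_formula n (Conj \<phi> \<psi>) \<longleftrightarrow> wf_formula n \<phi> \<and> wf_formula n \<psi>"
| "wf_formula n (Imp \<phi> \<psi>) \<longleftrightarrow> wf_formula n \<phi> \<and> wf_formula n \<psi>"
| "wf_formula n (Exists \<phi>) \<longleftrightarrow> wf_formula (Suc n) \<phi>"
| "wf_formula n (Forall \<phi>) \<longleftrightarrow> wf_formula (Suc n) \<phi>"
| "wf_formula n (Exists_block j \<phi>) \<longleftrightarrow> wf_formula (j + n) \<phi>"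

lemma definable_sat: "wf_formula n \<phi> \<Longrightarrow> definable n (sat \<phi>)"
proof (induction \<phi> arbitrary: n)
  case (Atom S g) then show ?case by (auto intro: definable_atom)
next
  case (Neg \<phi>) then show ?case using definable_not by auto
next
  case (Conj \<phi> \<psi>) then show ?case using definable_conj[of n "sat \<phi>" "sat \<psi>"] by auto
next
  case (Imp \<phi> \<psi>) then show ?case using definable_imp[of n "sat \<phi>" "sat \<psi>"] by auto
next
  case (Exists \<phi>) then show ?case using definable_ex[of n "sat \<phi>"] by auto
next
  case (Forall \<phi>) then show ?case using definable_all[of n "sat \<phi>"] by auto
next
  case (Exists_block j \<phi>) then show ?case using definable_ex_block[of j n "sat \<phi>"] by auto
qed

lemma definable_by_formula:
  "wf_formula n \<phi> \<Longrightarrow> (\<And>e. length e = n \<Longrightarrow> sat \<phi> e = Q e) \<Longrightarrow> definable n Q"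
  using definable_sat definable_cong by blast

lemma wf_true_fm [simp]: "wf_formula n true_fm"
  by (simp add: true_fm_def exI[of _ 0, OF definable_empty])

lemma wf_less_fm [simp]: "i < n \<Longrightarrow> j < n \<Longrightarrow> wf_formula n (less_fm i j)"
  using definable_less by (auto simp: less_fm_def)

lemma wf_le_fm [simp]: "i < n \<Longrightarrow> j < n \<Longrightarrow> wf_formula n (le_fm i j)"
  by (simp add: le_fm_def)

lemma wf_plus_fm [simp]: "i < n \<Longrightarrow> j < n \<Longrightarrow> l < n \<Longrightarrow> wf_formula n (plus_fm i j l)"
  using definable_plus by (auto simp: plus_fm_def)

lemma wf_const_fm [simp]: "i < n \<Longrightarrow> wf_formula n (const_fm i c)"
  using definable_singleton by (auto simp: const_fm_def)

lemma wf_pos_fm [simp]: "i < n \<Longrightarrow> wf_formula n (pos_fm i)"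
  by (simp add: pos_fm_def)

lemma wf_diff_less_fm [simp]:
  "i < n \<Longrightarrow> j < n \<Longrightarrow> l < n \<Longrightarrow> wf_formula n (diff_less_fm i j l)"
  by (simp add: diff_less_fm_def)

lemma wf_dist_less_fm [simp]:
  "i < n \<Longrightarrow> j < n \<Longrightarrow> l < n \<Longrightarrow> wf_formula n (dist_less_fm i j l)"
  by (simp add: dist_less_fm_def)

lemma wf_dist_less_const_fm [simp]: "i < n \<Longrightarrow> j < n \<Longrightarrow> wf_formula n (dist_less_const_fm i j c)"
  by (simp add: dist_less_const_fm_def)

lemma wf_conj_upto: "(\<And>i. i < m \<Longrightarrow> wf_formula n (F i)) \<Longrightarrow> wf_formula n (conj_upto m F)"
  by (induction m) auto

lemma wf_vdist_less_fm [simp]: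
  "a + m \<le> n \<Longrightarrow> b + m \<le> n \<Longrightarrow> l < n \<Longrightarrow> wf_formula n (vdist_less_fm a b m l)"
  unfolding vdist_less_fm_def by (auto intro!: wf_conj_upto)

lemma definable_fix_first: "definable (Suc n) Q \<Longrightarrow> definable n (\<lambda>e. Q (c # e))"
proof -
  let ?\<phi> = "Exists (Conj (const_fm 0 c) (Atom {e \<in> tuples (Suc n). Q e} (\<lambda>e. take (Suc n) e)))"
  assume "definable (Suc n) Q"
  then have "wf_formula n ?\<phi>" by (auto simp: definable_def)
  then show ?thesis by (rule definable_by_formula) (auto simp: tuples_def)
qed

lemma definable_is_sup:
  assumes "definable 2 (\<lambda>e. A (e!0) (e!1))"
  shows "definable 2 (\<lambda>e. is_sup {a. A (e!0) a} (e!1))"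
proof -
  let ?A = "{e \<in> tuples 2. A (e!0) (e!1)}"
  let ?\<phi> = "Conj (Forall (Imp (Atom ?A (\<lambda>e. [e!1, e!0])) (le_fm 0 2)))
    (Forall (Imp (Forall (Imp (Atom ?A (\<lambda>e. [e!2, e!0])) (le_fm 0 1))) (le_fm 2 0)))"
  have "D 2 ?A" using assms by (simp add: definable_def)
  then have "wf_formula 2 ?\<phi>" by auto
  then show ?thesis
    by (rule definable_by_formula) (simp add: is_sup_def tuples_def)
qed

lemma definable_sups:
  assumes "definable 2 (\<lambda>e. A (e!0) (e!1))"
  shows "definable 1 (\<lambda>e. \<exists>t>0. is_sup {a. A t a} (e!0))"
proof -
  let ?S = "{e \<in> tuples 2. is_sup {a. A (e!0) a} (e!1)}"
  have "D 2 ?S" using definable_is_sup[OF assms] by (simp add: definable_def)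
  then show ?thesis
    by (intro definable_by_formula[where \<phi> = "Exists (Conj (pos_fm 0) (Atom ?S (\<lambda>e. [e!0, e!1])))"])
      (auto simp: tuples_def)
qed

end

section \<open>Ordered group arithmetic and adherent points\<close>

lemma diff_add_diff: "(a - b) + (b - c) = a - (c::'a::group_add)"
  by (metis add.assoc diff_add_cancel diff_conv_add_uminus)

locale definable_ordered_group = definable_sets D
  for D :: "nat \<Rightarrow> 'a::{dense_linorder,no_top,no_bot,group_add} list set \<Rightarrow> bool" +
  assumes add_mono_both: "\<And>a b c :: 'a. a \<le> b \<Longrightarrow> c + a \<le> c + b \<and> a + c \<le> b + c"
begin

lemma add_le_add_left: "a \<le> b \<Longrightarrow> c + a \<le> c + (b::'a)"
  and add_le_add_right: "a \<le> b \<Longrightarrow> a + c \<le> b + (c::'a)"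
  using add_mono_both by auto

lemma add_less_add_left: "a < b \<Longrightarrow> c + a < c + (b::'a)"
  and add_less_add_right: "a < b \<Longrightarrow> a + c < b + (c::'a)"
  by (auto simp: less_le intro: add_le_add_left add_le_add_right)

lemma add_le_add: "a \<le> b \<Longrightarrow> c \<le> d \<Longrightarrow> a + c \<le> b + (d::'a)"
  using add_le_add_right add_le_add_left order_trans by blast

lemma add_less_add: "a < b \<Longrightarrow> c < d \<Longrightarrow> a + c < b + (d::'a)"
  using add_less_add_right add_less_add_left less_trans by blast

lemma neg_le_neg: "a \<le> b \<Longrightarrow> -b \<le> -(a::'a)"
proof -
  assume "a \<le> b"
  then have "-b + a + -a \<le> -b + b + -a" by (intro add_le_add_right add_le_add_left)
  then show ?thesis by (simp add: add.assoc)
qed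

lemma neg_less_neg: "a < b \<Longrightarrow> -b < -(a::'a)"
  using neg_le_neg[of a b] by (auto simp: less_le)

lemma diff_less_iff: "a - b < d \<longleftrightarrow> a < d + (b::'a)"
proof
  assume "a - b < d"
  then show "a < d + b" using add_less_add_right[of "a - b" d b] by simp
next
  assume "a < d + b"
  then show "a - b < d" using add_less_add_right[of a "d + b" "-b"] by (simp add: add.assoc)
qed

lemma exists_half: "0 < (e::'a) \<Longrightarrow> \<exists>d>0. d + d \<le> e"
proof -
  assume "0 < e"
  then obtain a where a: "0 < a" "a < e" using dense by blast
  define d where "d = min a (-a + e)"
  have "0 < -a + e" using add_less_add_left[OF a(2), of "-a"] by simp
  then have "0 < d" using a by (simp add: d_def)
  moreover have "d + d \<le> a + (-a + e)"
    by (intro add_le_add) (simp_all add: d_def)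
  ultimately show ?thesis by (auto simp: add.assoc[symmetric])
qed

lemma gabs_less_iff: "gabs x < d \<longleftrightarrow> x < d \<and> - x < d"
  and gabs_le_iff: "gabs x \<le> d \<longleftrightarrow> x \<le> d \<and> - x \<le> d"
  by (simp_all add: gabs_def)

lemma gabs_zero [simp]: "gabs (0::'a) = 0"
  by (simp add: gabs_def)

lemma gabs_minus_commute: "gabs (a - b) = gabs (b - (a::'a))"
  by (simp add: gabs_def max.commute)

lemma gabs_triangle_less:
  "gabs (a - b) < d \<Longrightarrow> gabs (b - c) < d \<Longrightarrow> gabs (a - c) < d + (d::'a)"
proof -
  assume "gabs (a - b) < d" "gabs (b - c) < d"
  then have "a - b < d" "b - a < d" "b - c < d" "c - b < d" by (simp_all add: gabs_less_iff)
  then have "(a - b) + (b - c) < d + d" "(c - b) + (b - a) < d + d" by (simp_all only: add_less_add)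
  then show ?thesis by (simp only: gabs_less_iff diff_add_diff minus_diff_eq)
qed

text \<open>The group need not be commutative, hence the two orders of summation.\<close>

lemma gabs_add_le: "gabs a \<le> p \<Longrightarrow> gabs b \<le> q \<Longrightarrow> gabs (a + b) \<le> max (p + q) (q + (p::'a))"
proof -
  assume "gabs a \<le> p" "gabs b \<le> q"
  then have "a \<le> p" "-a \<le> p" "b \<le> q" "-b \<le> q" by (simp_all add: gabs_le_iff)
  then have "a + b \<le> p + q" "-b + -a \<le> q + p" by (simp_all only: add_le_add)
  then have "max (a + b) (-b + -a) \<le> max (p + q) (q + p)" by (rule max.mono)
  then show ?thesis by (simp add: gabs_def minus_add)
qed

lemma gabs_le_if_close: "gabs (a - b) < c \<Longrightarrow> gabs b \<le> R \<Longrightarrow> gabs a \<le> max (c + R) (R + (c::'a))"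
  using gabs_add_le[of "a - b" c b R] by simp

lemma vnorm_less_iff: "vnorm xs < d \<longleftrightarrow> 0 < d \<and> (\<forall>y\<in>set xs. gabs y < (d::'a))"
  and vnorm_le_iff: "vnorm xs \<le> d \<longleftrightarrow> 0 \<le> d \<and> (\<forall>y\<in>set xs. gabs y \<le> (d::'a))"
  by (induction xs) (auto simp: vnorm_def)

lemma vdist_less_iff:
  "length x = length y \<Longrightarrow>
   vdist x y < d \<longleftrightarrow> 0 < d \<and> (\<forall>i<length x. gabs (x!i - y!i) < (d::'a))"
  unfolding vdist_def vnorm_less_iff by (auto simp: set_zip)

lemma vdist_Cons_less_iff: "vdist (a # x) (b # y) < d \<longleftrightarrow> gabs (a - b) < d \<and> vdist x y < (d::'a)"
  unfolding vdist_def vnorm_less_iff by auto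

lemma vdist_self_less_iff [simp]: "vdist x x < d \<longleftrightarrow> 0 < (d::'a)"
  by (auto simp: vdist_less_iff)

lemma vdist_triangle_less:
  assumes "length x = length y" "length y = length z" "vdist x y < d" "vdist y z < d"
  shows "vdist x z < d + (d::'a)"
proof -
  have "0 < d" using assms by (simp add: vdist_less_iff)
  then have "0 + 0 < d + d" by (intro add_less_add)
  moreover have "gabs (x!i - z!i) < d + d" if "i < length x" for i
    using assms that by (intro gabs_triangle_less[of _ "y!i"]) (simp_all add: vdist_less_iff)
  ultimately show ?thesis using assms(1,2) by (simp add: vdist_less_iff)
qed

lemma sat_diff_less_fm [simp]: "sat (diff_less_fm i j l) (e :: 'a list) \<longleftrightarrow> e!i - e!j < e!l"
  by (simp add: diff_less_fm_def diff_less_iff)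

lemma sat_dist_less_fm [simp]: "sat (dist_less_fm i j l) (e :: 'a list) \<longleftrightarrow> gabs (e!i - e!j) < e!l"
  by (simp add: dist_less_fm_def gabs_less_iff)

lemma sat_dist_less_const_fm [simp]: "sat (dist_less_const_fm i j c) (e :: 'a list) \<longleftrightarrow> gabs (e!i - e!j) < c"
  by (simp add: dist_less_const_fm_def)

lemma sat_vdist_less_fm [simp]:
  "a + m \<le> length (e :: 'a list) \<Longrightarrow> b + m \<le> length e \<Longrightarrow>
   sat (vdist_less_fm a b m l) e \<longleftrightarrow> vdist (take m (drop a e)) (take m (drop b e)) < e!l"
  by (simp add: vdist_less_fm_def vdist_less_iff)

text \<open>The length condition matters: \<^const>\<open>vdist\<close> compares lists only up to the shorter length.\<close>

definition adherent :: "('a list \<Rightarrow> bool) \<Rightarrow> 'a list \<Rightarrow> bool" where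
  "adherent S x \<longleftrightarrow> (\<forall>u>0. \<exists>y. length y = length x \<and> S y \<and> vdist x y < u)"

lemma adherent_self: "S x \<Longrightarrow> adherent S x"
  by (auto simp: adherent_def)

lemma adherent_mono: "adherent S x \<Longrightarrow> (\<And>y. S y \<Longrightarrow> S' y) \<Longrightarrow> adherent S' x"
  unfolding adherent_def by blast

lemma adherent_length: "adherent S x \<Longrightarrow> (\<And>y. S y \<Longrightarrow> length y = n) \<Longrightarrow> length x = n"
  unfolding adherent_def by (metis gt_ex)

lemma adherent_adherent: "adherent (adherent S) x \<Longrightarrow> adherent S x"
  unfolding adherent_def
proof (intro allI impI)
  fix u :: 'a
  assume x: "\<forall>u>0. \<exists>y. length y = length x \<and>
                 (\<forall>u>0. \<exists>z. length z = length y \<and> S z \<and> vdist y z < u) \<and> vdist x y < u"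
    and "0 < u"
  then obtain u' where u': "0 < u'" "u' + u' \<le> u" using exists_half by blast
  then obtain y z where "length y = length x" "vdist x y < u'"
    and "S z" "length z = length y" "vdist y z < u'"
    using x by meson
  then show "\<exists>z. length z = length x \<and> S z \<and> vdist x z < u"
    using vdist_triangle_less[of x y z u'] u'(2) by auto
qed

lemma closed_in_tuples_adherent:
  assumes "closed_in_tuples m C" and "length x = m" and "adherent (\<lambda>y. y \<in> C) x"
  shows "x \<in> C"
proof (rule ccontr)
  assume "x \<notin> C"
  then obtain u where "0 < u" and "\<forall>y \<in> tuples m. vdist x y < u \<longrightarrow> y \<notin> C"
    using assms(1,2) unfolding closed_in_tuples_def tuples_def by blast
  then show False using assms(2,3) unfolding adherent_def tuples_def by force
qed

lemma definable_adherent: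
  assumes "definable (Suc n) (\<lambda>e. S (e!0) (drop 1 e))"
  shows "definable (Suc n) (\<lambda>e. adherent (S (e!0)) (drop 1 e))"
proof -
  let ?A = "{e \<in> tuples (Suc n). S (e!0) (drop 1 e)}"
  let ?\<phi> = "Forall (Imp (pos_fm 0) (Exists_block n
              (Conj (Atom ?A (\<lambda>e. e!(n+1) # take n e)) (vdist_less_fm (n + 2) 0 n n))))"
  have "D (Suc n) ?A" using assms by (simp add: definable_def)
  then have "wf_formula (Suc n) ?\<phi>" by auto
  then show ?thesis
  proof (rule definable_by_formula)
    fix e :: "'a list" assume "length e = Suc n"
    then show "sat ?\<phi> e = adherent (S (e!0)) (drop 1 e)"
      by (simp add: adherent_def tuples_def nth_append cong: conj_cong)
  qed
qed

lemma is_sup_approx: "is_sup S s \<Longrightarrow> 0 < u \<Longrightarrow> \<exists>b\<in>S. gabs (s - b) < (u::'a)"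
proof -
  assume s: "is_sup S s" and u: "0 < u"
  have "-u + s < 0 + s" using neg_less_neg[OF u] by (intro add_less_add_right) simp
  then have "\<not> s \<le> -u + s" by simp
  then have "\<not> (\<forall>x\<in>S. x \<le> -u + s)" using s unfolding is_sup_def by blast
  then obtain b where b: "b \<in> S" "-u + s < b" by (auto simp: not_le)
  have "u + (-u + s) < u + b" using b(2) by (rule add_less_add_left)
  then have "s - b < u" by (simp add: add.assoc[symmetric] diff_less_iff)
  moreover have "b \<le> s" using s b(1) unfolding is_sup_def by blast
  then have "b < u + s" using add_less_add_right[OF u, of s] by simp
  then have "b - s < u" by (simp add: diff_less_iff)
  ultimately show ?thesis using b(1) by (auto simp: gabs_less_iff)
qed

lemma is_inf_approx: "is_inf S s \<Longrightarrow> 0 < u \<Longrightarrow> \<exists>b\<in>S. s \<le> b \<and> b < u + (s::'a)"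
proof -
  assume s: "is_inf S s" and u: "0 < u"
  have "0 + s < u + s" using u by (rule add_less_add_right)
  then show ?thesis using s unfolding is_inf_def by (metis add_0 not_le)
qed

lemma gabs_diff_less_if_between: "0 < u \<Longrightarrow> a \<le> b \<Longrightarrow> b < u + a \<Longrightarrow> gabs (a - b) < (u::'a)"
proof -
  assume "0 < u" "a \<le> b" "b < u + a"
  have "a - b \<le> 0" using add_le_add_right[OF \<open>a \<le> b\<close>, of "-b"] by simp
  then have "a - b < u" using \<open>0 < u\<close> by (rule le_less_trans)
  moreover have "b - a < u" using \<open>b < u + a\<close> by (simp add: diff_less_iff)
  ultimately show ?thesis by (simp add: gabs_less_iff)
qed

lemma definable_head_family:
  assumes "definable (Suc (Suc n)) (\<lambda>e. B (e!0) (drop 1 e))"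
  shows "definable 2 (\<lambda>e. adherent (\<lambda>y. \<exists>z. length z = n \<and> B (e!0) (y @ z)) [e!1])"
proof -
  let ?S = "{e \<in> tuples (Suc (Suc n)). B (e!0) (drop 1 e)}"
  let ?\<phi> = "Exists_block n (Atom ?S (\<lambda>e. e!n # e!(n+1) # take n e))"
  have "D (Suc (Suc n)) ?S" using assms by (simp add: definable_def)
  then have "wf_formula (Suc 1) ?\<phi>" by auto
  then have "definable (Suc 1) (\<lambda>e. \<exists>z. length z = n \<and> B (e!0) (drop 1 e @ z))"
  proof (rule definable_by_formula)
    fix e :: "'a list" assume "length e = Suc 1"
    then obtain t a where "e = [t, a]" by (auto simp: length_Suc_conv)
    then show "sat ?\<phi> e \<longleftrightarrow> (\<exists>z. length z = n \<and> B (e!0) (drop 1 e @ z))"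
      by (auto simp: tuples_def nth_append)
  qed
  then have "definable (Suc 1) (\<lambda>e. adherent (\<lambda>y. \<exists>z. length z = n \<and> B (e!0) (y @ z)) (drop 1 e))"
    by (rule definable_adherent)
  then have "definable 2 (\<lambda>e. adherent (\<lambda>y. \<exists>z. length z = n \<and> B (e!0) (y @ z)) (drop 1 e))"
    by (simp add: numeral_2_eq_2)
  then show ?thesis by (rule definable_cong) (auto simp: numeral_2_eq_2 length_Suc_conv)
qed

lemma definable_tail_family:
  assumes "definable (Suc (Suc n)) (\<lambda>e. B (e!0) (drop 1 e))"
  shows "definable (Suc n) (\<lambda>e. \<exists>b. B (e!0) (b # drop 1 e) \<and> gabs (b - a) < e!0)"
proof -
  let ?S = "{e \<in> tuples (Suc (Suc n)). B (e!0) (drop 1 e)}"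
  have "D (Suc (Suc n)) ?S" using assms by (simp add: definable_def)
  then show ?thesis
    by (intro definable_by_formula[where \<phi> = "Exists (Conj (Atom ?S (\<lambda>e. e!1 # e!0 # take n (drop 2 e)))
         (Exists (Conj (const_fm 0 a) (dist_less_fm 1 0 2))))"])
      (auto simp: tuples_def)
qed
lemma inf_of_sups_mem:
  fixes A :: "'a \<Rightarrow> 'a \<Rightarrow> bool"
  assumes closed: "\<And>t a. 0 < t \<Longrightarrow> (\<And>u. 0 < u \<Longrightarrow> \<exists>b. A t b \<and> gabs (a - b) < u) \<Longrightarrow> A t a"
    and mono: "\<And>s t a. 0 < s \<Longrightarrow> s \<le> t \<Longrightarrow> A s a \<Longrightarrow> A t a"
    and sup_exists: "\<And>t. 0 < t \<Longrightarrow> \<exists>v. is_sup {a. A t a} v"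
    and \<sigma>: "is_inf {v. \<exists>t>0. is_sup {a. A t a} v} \<sigma>" and "0 < t"
  shows "A t \<sigma>"
proof (rule closed[OF \<open>0 < t\<close>])
  fix u :: 'a assume "0 < u"
  obtain v t' where t': "0 < t'" "is_sup {a. A t' a} v" and v: "\<sigma> \<le> v" "v < u + \<sigma>"
    using is_inf_approx[OF \<sigma> \<open>0 < u\<close>] by blast
  define t'' where "t'' = min t t'"
  have t'': "0 < t''" "t'' \<le> t" "t'' \<le> t'" using \<open>0 < t\<close> t' by (auto simp: t''_def)
  then obtain v'' where v'': "is_sup {a. A t'' a} v''" using sup_exists by blast
  have "v'' \<le> v" using v'' t' mono[OF t''(1) t''(3)] unfolding is_sup_def by blast
  then have "v'' < u + \<sigma>" using v(2) by (rule le_less_trans)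
  moreover have "\<sigma> \<le> v''" using \<sigma> v'' t''(1) unfolding is_inf_def by blast
  ultimately have "gabs (\<sigma> - v'') < u" using \<open>0 < u\<close> by (intro gabs_diff_less_if_between)
  moreover have "A t'' v''" using closed[OF t''(1)] is_sup_approx[OF v''] by blast
  then have "A t v''" using mono[OF t''(1,2)] by blast
  ultimately show "\<exists>b. A t b \<and> gabs (\<sigma> - b) < u" by blast
qed

definition bounded_closed_nest :: "nat \<Rightarrow> 'a \<Rightarrow> ('a \<Rightarrow> 'a list \<Rightarrow> bool) \<Rightarrow> bool" where
  "bounded_closed_nest n R B \<longleftrightarrow>
     (\<forall>t>0. \<exists>x. B t x) \<and>
     (\<forall>t>0. \<forall>x. B t x \<longrightarrow> length x = n \<and> (\<forall>i<n. gabs (x!i) \<le> R)) \<and>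
     (\<forall>t>0. \<forall>x. length x = n \<and> adherent (B t) x \<longrightarrow> B t x) \<and>
     (\<forall>s t x. 0 < s \<and> s \<le> t \<and> B s x \<longrightarrow> B t x)"

lemma bounded_closed_nestI:
  assumes "\<And>t. 0 < t \<Longrightarrow> \<exists>x. B t x"
    and "\<And>t x. 0 < t \<Longrightarrow> B t x \<Longrightarrow> length x = n"
    and "\<And>t x i. 0 < t \<Longrightarrow> B t x \<Longrightarrow> i < n \<Longrightarrow> gabs (x!i) \<le> R"
    and "\<And>t x. 0 < t \<Longrightarrow> length x = n \<Longrightarrow> adherent (B t) x \<Longrightarrow> B t x"
    and "\<And>s t x. 0 < s \<Longrightarrow> s \<le> t \<Longrightarrow> B s x \<Longrightarrow> B t x"
  shows "bounded_closed_nest n R B"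
  using assms unfolding bounded_closed_nest_def by blast

lemma bounded_closed_nestD:
  assumes "bounded_closed_nest n R B"
  shows bounded_closed_nest_nonempty: "0 < t \<Longrightarrow> \<exists>x. B t x"
    and bounded_closed_nest_length: "0 < t \<Longrightarrow> B t x \<Longrightarrow> length x = n"
    and bounded_closed_nest_bounded: "0 < t \<Longrightarrow> B t x \<Longrightarrow> i < n \<Longrightarrow> gabs (x!i) \<le> R"
    and bounded_closed_nest_closed: "0 < t \<Longrightarrow> length x = n \<Longrightarrow> adherent (B t) x \<Longrightarrow> B t x"
    and bounded_closed_nest_mono: "0 < s \<Longrightarrow> s \<le> t \<Longrightarrow> B s x \<Longrightarrow> B t x"
  using assms unfolding bounded_closed_nest_def by blast+

lemma bounded_closed_nest_adherent:
  assumes "0 < c"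
    and nonempty: "\<And>t. 0 < t \<Longrightarrow> \<exists>x. S t x"
    and length: "\<And>t x. 0 < t \<Longrightarrow> S t x \<Longrightarrow> length x = n"
    and bounded: "\<And>t x i. 0 < t \<Longrightarrow> S t x \<Longrightarrow> i < n \<Longrightarrow> gabs (x!i) \<le> R"
    and mono: "\<And>s t x. 0 < s \<Longrightarrow> s \<le> t \<Longrightarrow> S s x \<Longrightarrow> S t x"
  shows "bounded_closed_nest n (max (c + R) (R + c)) (\<lambda>t. adherent (S t))"
proof (rule bounded_closed_nestI)
  fix t :: 'a assume "0 < t"
  then show "\<exists>x. adherent (S t) x" using nonempty by (blast intro: adherent_self)
next
  fix t x assume "0 < t" "adherent (S t) x"
  then show "length x = n" using length by (blast intro: adherent_length)
next
  fix t x i assume "0 < t" "adherent (S t) x" "i < n"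
  then obtain y where y: "length y = length x" "S t y" "vdist x y < c"
    using \<open>0 < c\<close> unfolding adherent_def by blast
  then have "gabs (x!i - y!i) < c"
    using \<open>i < n\<close> length[OF \<open>0 < t\<close>] by (auto simp: vdist_less_iff)
  then show "gabs (x!i) \<le> max (c + R) (R + c)"
    using bounded[OF \<open>0 < t\<close> y(2) \<open>i < n\<close>] by (rule gabs_le_if_close)
next
  fix t x assume "adherent (adherent (S t)) x"
  then show "adherent (S t) x" by (rule adherent_adherent)
next
  fix s t x assume "0 < s" "s \<le> t" "adherent (S s) x"
  then show "adherent (S t) x" using mono by (blast intro: adherent_mono)
qed

lemma bounded_closed_nest_tail:
  assumes nest: "bounded_closed_nest (Suc n) R B" and "0 < c"
    and head: "\<And>t. 0 < t \<Longrightarrow> adherent (\<lambda>y. \<exists>z. length z = n \<and> B t (y @ z)) [a]"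
  shows "bounded_closed_nest n (max (c + R) (R + c))
           (\<lambda>t. adherent (\<lambda>y. \<exists>b. B t (b # y) \<and> gabs (b - a) < t))"
proof (rule bounded_closed_nest_adherent[OF \<open>0 < c\<close>])
  fix t :: 'a assume "0 < t"
  then obtain b z where "B t (b # z)" "gabs (a - b) < t"
    using head[OF \<open>0 < t\<close>] by (auto simp: adherent_def length_Suc_conv vdist_Cons_less_iff)
  then show "\<exists>z b. B t (b # z) \<and> gabs (b - a) < t" by (metis gabs_minus_commute)
next
  fix t y assume "0 < t" "\<exists>b. B t (b # y) \<and> gabs (b - a) < t"
  then show "length y = n" using bounded_closed_nest_length[OF nest] by fastforce
next
  fix t y i assume "0 < t" "\<exists>b. B t (b # y) \<and> gabs (b - a) < t" "i < n"
  then show "gabs (y!i) \<le> R" using bounded_closed_nest_bounded[OF nest, of t _ "Suc i"] by fastforce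
next
  fix s t y assume "0 < s" "s \<le> t" "\<exists>b. B s (b # y) \<and> gabs (b - a) < s"
  then show "\<exists>b. B t (b # y) \<and> gabs (b - a) < t"
    using bounded_closed_nest_mono[OF nest] by (meson less_le_trans)
qed

lemma bounded_closed_nest_Cons:
  assumes nest: "bounded_closed_nest (Suc n) R B" and "length z = n" and "0 < t"
    and tail: "\<And>t. 0 < t \<Longrightarrow> adherent (\<lambda>y. \<exists>b. B t (b # y) \<and> gabs (b - a) < t) z"
  shows "B t (a # z)"
proof (rule bounded_closed_nest_closed[OF nest \<open>0 < t\<close>])
  show "length (a # z) = Suc n" using \<open>length z = n\<close> by simp
  show "adherent (B t) (a # z)" unfolding adherent_def
  proof (intro allI impI)
    fix u :: 'a assume "0 < u"
    define s where "s = min t u"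
    have s: "0 < s" "s \<le> t" "s \<le> u" using \<open>0 < t\<close> \<open>0 < u\<close> by (auto simp: s_def)
    then obtain y b where "length y = length z" "vdist z y < u" "B s (b # y)" "gabs (b - a) < s"
      using tail[OF s(1)] \<open>0 < u\<close> unfolding adherent_def by blast
    moreover have "gabs (a - b) < u" using \<open>gabs (b - a) < s\<close> s(3) by (simp add: gabs_minus_commute)
    moreover have "B t (b # y)" using bounded_closed_nest_mono[OF nest s(1,2) \<open>B s (b # y)\<close>] .
    ultimately show "\<exists>x. length x = length (a # z) \<and> B t x \<and> vdist (a # z) x < u"
      by (intro exI[of _ "b # y"]) (simp add: vdist_Cons_less_iff)
  qed
qed

end

section \<open>Definable compactness\<close>

locale definably_complete_group = definable_ordered_group +
  assumes definably_complete: "definably_complete D"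
begin

lemma definable_has_sup_inf:
  assumes "definable 1 (\<lambda>e. Q (e!0))" and "Q x"
  shows "(\<And>y. Q y \<Longrightarrow> y \<le> b) \<Longrightarrow> \<exists>s. is_sup {y. Q y} s"
    and "(\<And>y. Q y \<Longrightarrow> b \<le> y) \<Longrightarrow> \<exists>s. is_inf {y. Q y} s"
proof -
  let ?A = "{e \<in> tuples 1. Q (e!0)}"
  have "D 1 ?A" using assms(1) by (simp add: definable_def)
  note complete = definably_complete[unfolded definably_complete_def, THEN spec, THEN mp, OF this]
  have A: "{y. [y] \<in> ?A} = {y. Q y}" by (simp add: tuples_def)
  show "(\<And>y. Q y \<Longrightarrow> y \<le> b) \<Longrightarrow> \<exists>s. is_sup {y. Q y} s"
    and "(\<And>y. Q y \<Longrightarrow> b \<le> y) \<Longrightarrow> \<exists>s. is_inf {y. Q y} s"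
    using complete assms(2) unfolding Let_def is_sup_def is_inf_def A by blast+
qed

lemma definable_fiber_has_sup:
  assumes "definable 2 (\<lambda>e. A (e!0) (e!1))" and "A t a" and "\<And>b. A t b \<Longrightarrow> b \<le> R"
  shows "\<exists>v. is_sup {a. A t a} v"
proof -
  have "definable (Suc 1) (\<lambda>e. A (e!0) (e!1))" using assms(1) by (simp add: numeral_2_eq_2)
  then have "definable 1 (\<lambda>e. A ((t # e)!0) ((t # e)!1))" by (rule definable_fix_first)
  then have "definable 1 (\<lambda>e. A t (e!0))" by simp
  then show ?thesis using assms(2,3) by (rule definable_has_sup_inf(1))
qed

lemma definable_closed_nest_scalar:
  fixes A :: "'a \<Rightarrow> 'a \<Rightarrow> bool"
  assumes definable: "definable 2 (\<lambda>e. A (e!0) (e!1))"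
    and nonempty: "\<And>t. 0 < t \<Longrightarrow> \<exists>a. A t a"
    and bounded: "\<And>t a. 0 < t \<Longrightarrow> A t a \<Longrightarrow> gabs a \<le> R"
    and closed: "\<And>t a. 0 < t \<Longrightarrow> (\<And>u. 0 < u \<Longrightarrow> \<exists>b. A t b \<and> gabs (a - b) < u) \<Longrightarrow> A t a"
    and mono: "\<And>s t a. 0 < s \<Longrightarrow> s \<le> t \<Longrightarrow> A s a \<Longrightarrow> A t a"
  shows "\<exists>a. \<forall>t>0. A t a"
proof -
  define sups where "sups = {v. \<exists>t>0. is_sup {a. A t a} v}"
  have sup_exists: "\<exists>v. is_sup {a. A t a} v" if "0 < t" for t
  proof -
    obtain a where "A t a" using nonempty[OF \<open>0 < t\<close>] by blast
    moreover have "b \<le> R" if "A t b" for b using bounded[OF \<open>0 < t\<close> that] by (simp add: gabs_le_iff)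
    ultimately show ?thesis by (rule definable_fiber_has_sup[OF definable])
  qed
  have sups_definable: "definable 1 (\<lambda>e. e!0 \<in> sups)"
    using definable_sups[OF definable] by (simp add: sups_def)
  obtain t0 :: 'a where "0 < t0" using gt_ex by blast
  then obtain v0 where "is_sup {a. A t0 a} v0" using sup_exists by blast
  then have v0: "v0 \<in> sups" using \<open>0 < t0\<close> unfolding sups_def by blast
  have sups_bounded: "-R \<le> v" if "v \<in> sups" for v
  proof -
    obtain t where t: "0 < t" "is_sup {a. A t a} v" using \<open>v \<in> sups\<close> by (auto simp: sups_def)
    then obtain a where "A t a" using nonempty by blast
    then have "-a \<le> R" using bounded[OF t(1)] by (simp add: gabs_le_iff)
    then have "-R \<le> a" using neg_le_neg[of "-a" R] by simp
    moreover have "a \<le> v" using t(2) \<open>A t a\<close> by (simp add: is_sup_def)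
    ultimately show ?thesis by simp
  qed
  obtain \<sigma> where \<sigma>: "is_inf sups \<sigma>"
    using definable_has_sup_inf(2)[OF sups_definable v0 sups_bounded] by auto
  have "A t \<sigma>" if "0 < t" for t
    using closed mono sup_exists \<sigma> that unfolding sups_def by (rule inf_of_sups_mem)
  then show ?thesis by blast
qed

lemma definable_closed_nest_head:
  assumes definable: "definable (Suc (Suc n)) (\<lambda>e. B (e!0) (drop 1 e))"
    and nest: "bounded_closed_nest (Suc n) R B"
  shows "\<exists>a. \<forall>t>0. adherent (\<lambda>y. \<exists>z. length z = n \<and> B t (y @ z)) [a]"
proof -
  let ?H = "\<lambda>t y. \<exists>z. length z = n \<and> B t (y @ z)"
  obtain c :: 'a where "0 < c" using gt_ex by blast
  show ?thesis
  proof (rule definable_closed_nest_scalar[where R = "max (c + R) (R + c)"])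
    show "definable 2 (\<lambda>e. adherent (?H (e!0)) [e!1])"
      using definable by (rule definable_head_family)
  next
    fix t :: 'a assume "0 < t"
    then obtain x where "B t x" "length x = Suc n"
      using bounded_closed_nestD[OF nest] by blast
    then have "?H t [x!0]" by (intro exI[of _ "drop 1 x"]) (cases x, auto)
    then show "\<exists>a. adherent (?H t) [a]" by (blast intro: adherent_self)
  next
    fix t a :: 'a assume "0 < t" and "adherent (?H t) [a]"
    then obtain b z where "B t (b # z)" "gabs (a - b) < c"
      using \<open>0 < c\<close> by (auto simp: adherent_def length_Suc_conv vdist_Cons_less_iff)
    moreover have "gabs b \<le> R"
      using bounded_closed_nest_bounded[OF nest \<open>0 < t\<close> \<open>B t (b # z)\<close>, of 0] by simp
    ultimately show "gabs a \<le> max (c + R) (R + c)" by (intro gabs_le_if_close)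
  next
    fix t a :: 'a assume close: "\<And>u. 0 < u \<Longrightarrow> \<exists>b. adherent (?H t) [b] \<and> gabs (a - b) < u"
    have "adherent (adherent (?H t)) [a]" unfolding adherent_def[of "adherent (?H t)"]
    proof (intro allI impI)
      fix u :: 'a assume "0 < u"
      then obtain b where "adherent (?H t) [b]" "gabs (a - b) < u" using close by blast
      then show "\<exists>y. length y = length [a] \<and> adherent (?H t) y \<and> vdist [a] y < u"
        using \<open>0 < u\<close> by (intro exI[of _ "[b]"]) (simp add: vdist_Cons_less_iff)
    qed
    then show "adherent (?H t) [a]" by (rule adherent_adherent)
  next
    fix s t a :: 'a assume "0 < s" "s \<le> t" "adherent (?H s) [a]"
    then show "adherent (?H t) [a]"
      using bounded_closed_nest_mono[OF nest] by (blast intro: adherent_mono)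
  qed
qed

lemma definable_closed_nest:
  "definable (Suc n) (\<lambda>e. B (e!0) (drop 1 e)) \<Longrightarrow> bounded_closed_nest n R B \<Longrightarrow>
   \<exists>x. length x = n \<and> (\<forall>t>0. B t x)"
proof (induction n arbitrary: B R)
  case 0
  then show ?case by (auto dest: bounded_closed_nest_nonempty bounded_closed_nest_length)
next
  case (Suc n)
  obtain a where a: "\<And>t. 0 < t \<Longrightarrow> adherent (\<lambda>y. \<exists>z. length z = n \<and> B t (y @ z)) [a]"
    using definable_closed_nest_head[OF Suc.prems] by blast
  let ?T = "\<lambda>t. adherent (\<lambda>y. \<exists>b. B t (b # y) \<and> gabs (b - a) < t)"
  obtain c :: 'a where "0 < c" using gt_ex by blast
  have T_definable: "definable (Suc n) (\<lambda>e. ?T (e!0) (drop 1 e))"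
    using definable_adherent[OF definable_tail_family[OF Suc.prems(1)]] .
  have T_nest: "bounded_closed_nest n (max (c + R) (R + c)) ?T"
    using Suc.prems(2) \<open>0 < c\<close> a by (rule bounded_closed_nest_tail)
  obtain z where z: "length z = n" "\<And>t. 0 < t \<Longrightarrow> ?T t z"
    using Suc.IH[OF T_definable T_nest] by blast
  have "B t (a # z)" if "0 < t" for t
    using Suc.prems(2) z(1) that z(2) by (rule bounded_closed_nest_Cons)
  then show ?case using z(1) by (intro exI[of _ "a # z"]) simp
qed

end

section \<open>Equi-continuity\<close>

definition jump_point ::
  "'a::{linorder,group_add} list set \<Rightarrow> 'a list set \<Rightarrow> ('a list \<Rightarrow> 'a list \<Rightarrow> 'a) \<Rightarrow> 'a \<Rightarrow> 'a \<Rightarrow>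
    'a list \<Rightarrow> bool" where
  "jump_point C P f \<epsilon> t x \<longleftrightarrow>
     x \<in> C \<and> (\<exists>p\<in>P. \<exists>x'\<in>C. vdist x x' < t \<and> \<epsilon> \<le> gabs (f x p - f x' p))"

lemma graph_mem_iff:
  assumes "\<And>x. x \<in> C \<Longrightarrow> length x = m" and "\<And>p. p \<in> P \<Longrightarrow> length p = k"
    and "length x = m" and "length p = k"
  shows "x @ p @ [v] \<in> {x @ p @ [f x p] | x p. x \<in> C \<and> p \<in> P} \<longleftrightarrow> x \<in> C \<and> p \<in> P \<and> v = f x p"
proof
  assume "x @ p @ [v] \<in> {x @ p @ [f x p] | x p. x \<in> C \<and> p \<in> P}"
  then obtain x' p' where eq: "x @ p @ [v] = x' @ p' @ [f x' p']" and "x' \<in> C" "p' \<in> P" by blast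
  then have "length x' = m" "length p' = k" using assms(1,2) by auto
  then have "x = x'" "p = p'" "v = f x' p'" using eq assms(3,4) by (auto simp: append_eq_append_conv)
  then show "x \<in> C \<and> p \<in> P \<and> v = f x p" using \<open>x' \<in> C\<close> \<open>p' \<in> P\<close> by simp
qed blast

context definable_ordered_group
begin

lemma definable_jump_point:
  assumes C: "D m C" and P: "D k P" and f: "definable_function D m k C P f"
  shows "definable (Suc m) (\<lambda>e. jump_point C P f \<epsilon> (e!0) (drop 1 e))"
proof -
  define G where "G = {x @ p @ [f x p] | x p. x \<in> C \<and> p \<in> P}"
  let ?\<phi> = "Conj (Atom C (\<lambda>e. take m (drop 1 e)))
    (Exists_block k (Conj (Atom P (\<lambda>e. take k e))
      (Exists_block m (Conj (Atom C (\<lambda>e. take m e))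
        (Conj (vdist_less_fm (m + k + 1) 0 m (m + k))
          (Exists (Exists
            (Conj (Atom G (\<lambda>e. take m (drop (m + k + 3) e) @ take k (drop (m + 2) e) @ [e!1]))
              (Conj (Atom G (\<lambda>e. take m (drop 2 e) @ take k (drop (m + 2) e) @ [e!0]))
                (Neg (dist_less_const_fm 1 0 \<epsilon>)))))))))))"
  have lengths: "\<And>x. x \<in> C \<Longrightarrow> length x = m" "\<And>p. p \<in> P \<Longrightarrow> length p = k"
    using definable_subset_tuples[OF C] definable_subset_tuples[OF P] by (auto simp: tuples_def)
  have G_mem: "x @ p @ [v] \<in> G \<longleftrightarrow> x \<in> C \<and> p \<in> P \<and> v = f x p"
    if "length x = m" "length p = k" for x p v
    unfolding G_def using graph_mem_iff[OF lengths that] .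
  have "D (m + k + 1) G" using f by (simp add: definable_function_def G_def)
  then have "wf_formula (Suc m) ?\<phi>" using C P by auto
  then show ?thesis
  proof (rule definable_by_formula)
    fix e :: "'a list" assume "length e = Suc m"
    then show "sat ?\<phi> e = jump_point C P f \<epsilon> (e!0) (drop 1 e)"
      using lengths by (simp add: jump_point_def G_mem nth_append drop_Cons' not_less cong: conj_cong) blast
  qed
qed

end

context definably_complete_group
begin

lemma jump_points_accumulate:
  assumes C: "D m C" and P: "D k P" and closed: "closed_in_tuples m C" and "bounded_in_tuples C"
    and f: "definable_function D m k C P f"
    and jump: "\<And>t. 0 < t \<Longrightarrow> \<exists>x. jump_point C P f \<epsilon> t x"
  shows "\<exists>x0\<in>C. \<forall>t>0. adherent (jump_point C P f \<epsilon> t) x0"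
proof -
  have length_C: "length x = m" if "x \<in> C" for x
    using that definable_subset_tuples[OF C] by (auto simp: tuples_def)
  obtain R where R: "\<And>x. x \<in> C \<Longrightarrow> vnorm x \<le> R"
    using \<open>bounded_in_tuples C\<close> unfolding bounded_in_tuples_def by blast
  obtain c :: 'a where "0 < c" using gt_ex by blast
  have "bounded_closed_nest m (max (c + R) (R + c)) (\<lambda>t. adherent (jump_point C P f \<epsilon> t))"
  proof (rule bounded_closed_nest_adherent[OF \<open>0 < c\<close> jump])
    show "length x = m" if "jump_point C P f \<epsilon> t x" for t x
      using that length_C by (simp add: jump_point_def)
    show "gabs (x!i) \<le> R" if "jump_point C P f \<epsilon> t x" "i < m" for t x i
      using that R length_C by (auto simp: jump_point_def vnorm_le_iff)
    show "jump_point C P f \<epsilon> t x" if "0 < s" "s \<le> t" "jump_point C P f \<epsilon> s x" for s t x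
      using that by (auto simp: jump_point_def intro: less_le_trans)
  qed
  then obtain x0 where "length x0 = m" and x0: "\<forall>t>0. adherent (jump_point C P f \<epsilon> t) x0"
    using definable_closed_nest[OF definable_adherent[OF definable_jump_point[OF C P f]]] by blast
  have "adherent (jump_point C P f \<epsilon> c) x0" using x0 \<open>0 < c\<close> by blast
  then have "adherent (\<lambda>y. y \<in> C) x0" by (rule adherent_mono) (simp add: jump_point_def)
  then have "x0 \<in> C" using closed \<open>length x0 = m\<close> closed_in_tuples_adherent by blast
  then show ?thesis using x0 by blast
qed

lemma uniformly_equi_continuous_if_equi_continuous:
  assumes C: "D m C" and "D k P" and "closed_in_tuples m C" and "bounded_in_tuples C"
    and "definable_function D m k C P f" and "equi_continuous C P f"
  shows "uniformly_equi_continuous C P f"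
proof (rule ccontr)
  assume "\<not> uniformly_equi_continuous C P f"
  then obtain \<epsilon> where "0 < \<epsilon>" and "\<And>d. 0 < d \<Longrightarrow> \<exists>p\<in>P. \<exists>x\<in>C. \<exists>x'\<in>C.
      vdist x x' < d \<and> \<not> gabs (f x p - f x' p) < \<epsilon>"
    unfolding uniformly_equi_continuous_def by blast
  then have jump: "\<And>t. 0 < t \<Longrightarrow> \<exists>x. jump_point C P f \<epsilon> t x"
    unfolding jump_point_def by (meson not_less)
  obtain x0 where "x0 \<in> C" and x0: "\<And>t. 0 < t \<Longrightarrow> adherent (jump_point C P f \<epsilon> t) x0"
    using jump_points_accumulate[OF assms(1-5) jump] by blast
  obtain \<epsilon>' where \<epsilon>': "0 < \<epsilon>'" "\<epsilon>' + \<epsilon>' \<le> \<epsilon>" using exists_half[OF \<open>0 < \<epsilon>\<close>] by blast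
  then obtain d where "0 < d"
    and d: "\<And>p x. p \<in> P \<Longrightarrow> x \<in> C \<Longrightarrow> vdist x0 x < d \<Longrightarrow> gabs (f x0 p - f x p) < \<epsilon>'"
    using \<open>equi_continuous C P f\<close> \<open>x0 \<in> C\<close> unfolding equi_continuous_def by meson
  obtain \<delta> where \<delta>: "0 < \<delta>" "\<delta> + \<delta> \<le> d" using exists_half[OF \<open>0 < d\<close>] by blast
  then obtain x where x: "length x = length x0" "jump_point C P f \<epsilon> \<delta> x" "vdist x0 x < \<delta>"
    using x0 unfolding adherent_def by blast
  then obtain p x' where "p \<in> P" "x \<in> C" "x' \<in> C" and "vdist x x' < \<delta>"
    and jump_at: "\<epsilon> \<le> gabs (f x p - f x' p)"
    unfolding jump_point_def by blast
  have "\<delta> \<le> d" using add_le_add_right[of 0 \<delta> \<delta>] \<delta> by force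
  then have "gabs (f x p - f x0 p) < \<epsilon>'"
    using d[OF \<open>p \<in> P\<close> \<open>x \<in> C\<close>] x(3) by (simp add: gabs_minus_commute)
  moreover have "length x' = length x" using \<open>x \<in> C\<close> \<open>x' \<in> C\<close> definable_subset_tuples[OF C]
    by (auto simp: tuples_def)
  then have "vdist x0 x' < \<delta> + \<delta>" using x(1,3) \<open>vdist x x' < \<delta>\<close> by (intro vdist_triangle_less) simp_all
  then have "gabs (f x0 p - f x' p) < \<epsilon>'" using d \<open>p \<in> P\<close> \<open>x' \<in> C\<close> \<delta>(2) by simp
  ultimately have "gabs (f x p - f x' p) < \<epsilon>' + \<epsilon>'" by (rule gabs_triangle_less)
  then show False using jump_at \<epsilon>'(2) by simp
qed

end

lemma equi_continuous_if_uniformly_equi_continuous: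
  "uniformly_equi_continuous C P f \<Longrightarrow> equi_continuous C P f"
  unfolding uniformly_equi_continuous_def equi_continuous_def by blast

theorem proposition2p7:
  fixes D :: "nat \<Rightarrow> 'a::{dense_linorder,no_top,no_bot,group_add} list set \<Rightarrow> bool"
    and C P :: "'a list set" and f :: "'a list \<Rightarrow> 'a list \<Rightarrow> 'a" and m k :: nat
  assumes ordered_group: "\<And>a b c :: 'a. a \<le> b \<Longrightarrow> c + a \<le> c + b \<and> a + c \<le> b + c"
    and "definable_structure D"
    and "definably_complete D"
    and "D m C" and "D k P"
    and "closed_in_tuples m C" and "bounded_in_tuples C"
    and "definable_function D m k C P f"
  shows "equi_continuous C P f \<longleftrightarrow> uniformly_equi_continuous C P f"
proof -
  interpret definably_complete_group D
    using assms(1-3) by unfold_locales auto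
  show ?thesis
    using uniformly_equi_continuous_if_equi_continuous[OF assms(4-8)]
      equi_continuous_if_uniformly_equi_continuous by blast
qed

end
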